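(* Let $\mathcal{H}$ be an $n$-dimensional (real or complex) Hilbert space, let $F=\{f_i\}_{i=1}^N$ be a Parseval frame for $\mathcal{H}$, and let $\{q_i\}_{i=1}^N$ be the weight number sequence associated with a probability sequence $\{p_i\}_{i=1}^N$. Then the following are equivalent: (i) the canonical dual of $F$ is a 1-erasure POD of $F$; (ii) the canonical dual of $F$ is a 1-erasure PSOD of $F$; (iii) the canonical dual of $F$ is a 1-erasure PASOD-frame of $F$.
   Context: A finite sequence $F=\{f_i\}_{i=1}^N$ in $\mathcal{H}$ is a Parseval frame if $\sum_{i=1}^N|\langle f,f_i\rangle|^2=\|f\|^2$ for all $f$; its frame operator $S_Ff=\sum_i\langle f,f_i\rangle f_i$ is then the identity and the canonical dual is $S_F^{-1}F=\{S_F^{-1}f_i\}_{i=1}^N$. A frame $G=\{g_i\}_{i=1}^N$ is a dual of $F$ if $f=\sum_i\langle f,f_i\rangle g_i=\sum_i\langle f,g_i\rangle f_i$ for all $f$. A probability sequence is $\{p_i\}_{i=1}^N$ with $0\le p_i\le1$, $\sum p_i=1$; weight numbers $q_i=\frac{\sum_{j} p_j}{\sum_{j} p_j-p_i}\cdot\frac{N-1}{n}$. For $\Lambda\subseteq\{1,\dots,N\}$ the error operator is $E_{\Lambda,(F,G)}f=\sum_{i\in\Lambda}q_i\langle f,f_i\rangle g_i$. Let $\mathcal{O}_P^{(1)}(F,G)=\max_{|\Lambda|=1}\|E_{\Lambda,(F,G)}\|$, $r_P^{(1)}(F,G)=\max_{|\Lambda|=1}\rho(E_{\Lambda,(F,G)})$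 ($\rho$ = spectral radius), $\mathcal{A}_P^{(1)}(F,G)=\max_{|\Lambda|=1}\frac{\|E_{\Lambda,(F,G)}\|+\rho(E_{\Lambda,(F,G)})}{2}$. A dual $G$ of $F$ is a 1-erasure POD (resp. PSOD, PASOD-frame) of $F$ if it minimizes $\mathcal{O}_P^{(1)}(F,\cdot)$ (resp. $r_P^{(1)}(F,\cdot)$, $\mathcal{A}_P^{(1)}(F,\cdot)$) over all duals of $F$. *)

theory Defs
  imports "HOL-Analysis.Analysis"
begin

text \<open>The n-dimensional Hilbert space over K (K = reals or complexes) is modelled as
  the set of vectors in complex^'n whose coordinates lie in K, n = CARD('n),
  with the standard inner product (linear in the first argument).\<close>

definition cinner :: "complex^'n \<Rightarrow> complex^'n \<Rightarrow> complex" where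
  "cinner x y = (\<Sum>i\<in>UNIV. x$i * cnj (y$i))"

definition Kvec :: "complex set \<Rightarrow> complex^'n \<Rightarrow> bool" where
  "Kvec K v \<longleftrightarrow> (\<forall>i. v$i \<in> K)"

definition is_parseval_frame :: "complex set \<Rightarrow> nat \<Rightarrow> (nat \<Rightarrow> complex^'n) \<Rightarrow> bool" where
  "is_parseval_frame K N F \<longleftrightarrow> (\<forall>i\<in>{1..N}. Kvec K (F i)) \<and>
     (\<forall>f. Kvec K f \<longrightarrow> (\<Sum>i=1..N. (cmod (cinner f (F i)))^2) = (norm f)^2)"

definition is_frame :: "complex set \<Rightarrow> nat \<Rightarrow> (nat \<Rightarrow> complex^'n) \<Rightarrow> bool" where
  "is_frame K N G \<longleftrightarrow> (\<forall>i\<in>{1..N}. Kvec K (G i)) \<and>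
     (\<exists>A B. 0 < A \<and> A \<le> B \<and> (\<forall>f. Kvec K f \<longrightarrow>
        A * (norm f)^2 \<le> (\<Sum>i=1..N. (cmod (cinner f (G i)))^2) \<and>
        (\<Sum>i=1..N. (cmod (cinner f (G i)))^2) \<le> B * (norm f)^2))"

definition is_dual :: "complex set \<Rightarrow> nat \<Rightarrow> (nat \<Rightarrow> complex^'n) \<Rightarrow> (nat \<Rightarrow> complex^'n) \<Rightarrow> bool" where
  "is_dual K N F G \<longleftrightarrow> is_frame K N G \<and>
     (\<forall>f. Kvec K f \<longrightarrow> f = (\<Sum>i=1..N. cinner f (F i) *s G i) \<and>
                        f = (\<Sum>i=1..N. cinner f (G i) *s F i))"

definition frame_op :: "nat \<Rightarrow> (nat \<Rightarrow> complex^'n) \<Rightarrow> complex^'n \<Rightarrow> complex^'n" where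
  "frame_op N F f = (\<Sum>i=1..N. cinner f (F i) *s F i)"

definition canonical_dual :: "complex set \<Rightarrow> nat \<Rightarrow> (nat \<Rightarrow> complex^'n) \<Rightarrow> nat \<Rightarrow> complex^'n" where
  "canonical_dual K N F i = inv_into {f. Kvec K f} (frame_op N F) (F i)"

definition prob_seq :: "nat \<Rightarrow> (nat \<Rightarrow> real) \<Rightarrow> bool" where
  "prob_seq N p \<longleftrightarrow> (\<forall>i\<in>{1..N}. 0 \<le> p i \<and> p i \<le> 1) \<and> (\<Sum>i=1..N. p i) = 1"

definition weight_num :: "nat \<Rightarrow> nat \<Rightarrow> (nat \<Rightarrow> real) \<Rightarrow> nat \<Rightarrow> real" where
  "weight_num N n p i = (\<Sum>j=1..N. p j) / ((\<Sum>j=1..N. p j) - p i) * ((real N - 1) / real n)"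

definition err_op :: "(nat \<Rightarrow> real) \<Rightarrow> (nat \<Rightarrow> complex^'n) \<Rightarrow> (nat \<Rightarrow> complex^'n)
    \<Rightarrow> nat set \<Rightarrow> complex^'n \<Rightarrow> complex^'n" where
  "err_op q F G \<Lambda> f = (\<Sum>i\<in>\<Lambda>. (complex_of_real (q i) * cinner f (F i)) *s G i)"

definition op_norm :: "complex set \<Rightarrow> (complex^'n \<Rightarrow> complex^'n) \<Rightarrow> real" where
  "op_norm K T = Sup {norm (T v) | v. Kvec K v \<and> norm v \<le> 1}"

text \<open>Spectral radius: largest modulus of a (complex) eigenvalue; for K = reals this is
  the spectral radius of the complexification, which is given by the same formula.\<close>
definition spec_rad :: "(complex^'n \<Rightarrow> complex^'n) \<Rightarrow> real" where
  "spec_rad T = Sup {cmod l | l. \<exists>v. v \<noteq> 0 \<and> T v = l *s v}"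

definition O1 :: "complex set \<Rightarrow> nat \<Rightarrow> (nat \<Rightarrow> real) \<Rightarrow> (nat \<Rightarrow> complex^'n) \<Rightarrow> (nat \<Rightarrow> complex^'n) \<Rightarrow> real" where
  "O1 K N q F G = Max {op_norm K (err_op q F G \<Lambda>) | \<Lambda>. \<Lambda> \<subseteq> {1..N} \<and> card \<Lambda> = 1}"

definition r1 :: "nat \<Rightarrow> (nat \<Rightarrow> real) \<Rightarrow> (nat \<Rightarrow> complex^'n) \<Rightarrow> (nat \<Rightarrow> complex^'n) \<Rightarrow> real" where
  "r1 N q F G = Max {spec_rad (err_op q F G \<Lambda>) | \<Lambda>. \<Lambda> \<subseteq> {1..N} \<and> card \<Lambda> = 1}"

definition A1 :: "complex set \<Rightarrow> nat \<Rightarrow> (nat \<Rightarrow> real) \<Rightarrow> (nat \<Rightarrow> complex^'n) \<Rightarrow> (nat \<Rightarrow> complex^'n) \<Rightarrow> real" where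
  "A1 K N q F G = Max {(op_norm K (err_op q F G \<Lambda>) + spec_rad (err_op q F G \<Lambda>)) / 2
                       | \<Lambda>. \<Lambda> \<subseteq> {1..N} \<and> card \<Lambda> = 1}"

definition is_POD where
  "is_POD K N q F G \<longleftrightarrow> is_dual K N F G \<and> (\<forall>G'. is_dual K N F G' \<longrightarrow> O1 K N q F G \<le> O1 K N q F G')"

definition is_PSOD where
  "is_PSOD K N q F G \<longleftrightarrow> is_dual K N F G \<and> (\<forall>G'. is_dual K N F G' \<longrightarrow> r1 N q F G \<le> r1 N q F G')"

definition is_PASOD where
  "is_PASOD K N q F G \<longleftrightarrow> is_dual K N F G \<and> (\<forall>G'. is_dual K N F G' \<longrightarrow> A1 K N q F G \<le> A1 K N q F G')"

end

(*
  For a Parseval frame the canonical dual is F itself. Every one-erasure error operator is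
  rank one, f \<mapsto> q_i <f, f_i> g_i, with norm |q_i| \<parallel>f_i\<parallel> \<parallel>g_i\<parallel> and spectral radius
  |q_i| |<g_i, f_i>|. Hence every dual G satisfies r(G) \<le> A(G) \<le> O(G) for the spectral,
  average and norm measures, and for G = F all three equal c = max_i |q_i| \<parallel>f_i\<parallel>^2.
  It remains to show that a dual G with r(G) < c yields a dual with O < c. The duals form an
  affine space; along (1 - t) F + t G the square of |q_i| \<parallel>f_i\<parallel> \<parallel>(1 - t) f_i + t g_i\<parallel> is at most
  (1 - t)^2 c^2 + 2 t (1 - t) c r(G) + t^2 O(G)^2, which is below c^2 for
  t = c (c - r(G)) / (c^2 + O(G)^2), simultaneously for all i.
  No property of the weights q_i is used; the probability sequence only ensures N \<ge> 1.
*)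

theory Submission
  imports Defs
begin

lemma cinner_add_left: "cinner (x + y) z = cinner x z + cinner y z"
  by (simp add: cinner_def algebra_simps sum.distrib)

lemma cinner_add_right: "cinner z (x + y) = cinner z x + cinner z y"
  by (simp add: cinner_def algebra_simps sum.distrib)

lemma cinner_scale_left: "cinner (c *s x) y = c * cinner x y"
  by (simp add: cinner_def sum_distrib_left algebra_simps)

lemma cinner_scale_right: "cinner x (c *s y) = cnj c * cinner x y"
  by (simp add: cinner_def sum_distrib_left algebra_simps)

lemma cinner_sum_left: "cinner (\<Sum>i\<in>A. f i) y = (\<Sum>i\<in>A. cinner (f i) y)"
  unfolding cinner_def by (simp add: sum_component sum_distrib_right sum.swap[of _ A])

lemma cinner_commute: "cinner y x = cnj (cinner x y)"
  by (simp add: cinner_def mult.commute)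

lemma Re_cinner: "Re (cinner x y) = inner x y"
  by (simp add: cinner_def inner_vec_def inner_complex_def Re_sum)

lemma cinner_self: "cinner x x = complex_of_real ((norm x)\<^sup>2)"
proof -
  have "cinner x x = complex_of_real (\<Sum>i\<in>UNIV. (cmod (x$i))\<^sup>2)"
    unfolding cinner_def by (simp add: complex_norm_square[symmetric])
  also have "(\<Sum>i\<in>UNIV. (cmod (x$i))\<^sup>2) = (norm x)\<^sup>2"
    unfolding norm_vec_def L2_set_def by (simp add: sum_nonneg)
  finally show ?thesis .
qed

lemma cinner_Cauchy_Schwarz: "cmod (cinner x y) \<le> norm x * norm y"
  unfolding cinner_def norm_vec_def
  by (rule order_trans[OF norm_sum])
     (use L2_set_mult_ineq[of "\<lambda>i. cmod (x$i)" "\<lambda>i. cmod (y$i)" UNIV] in \<open>simp add: norm_mult\<close>)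

lemma norm_smult: "norm (c *s (x::complex^'n)) = cmod c * norm x"
  unfolding norm_vec_def by (simp add: L2_set_right_distrib norm_mult)

lemma scaleR_eq_smult: "t *\<^sub>R (x::complex^'n) = complex_of_real t *s x"
  by (simp add: vec_eq_iff) (simp add: scaleR_conv_of_real)

lemma cinner_scaleR_right: "cinner x (t *\<^sub>R y) = t *\<^sub>R cinner x y"
  by (simp add: scaleR_eq_smult cinner_scale_right scaleR_conv_of_real)

lemma smult_scaleR_commute: "c *s (t *\<^sub>R (x::complex^'n)) = t *\<^sub>R (c *s x)"
  by (simp add: vec_eq_iff)

lemma scaleR_smult_assoc: "(t *\<^sub>R c) *s (x::complex^'n) = t *\<^sub>R (c *s x)"
  by (simp add: vec_eq_iff)

lemma Re_mult_cnj_le: "Re (a * cnj b) \<le> ((cmod a)\<^sup>2 + (cmod b)\<^sup>2) / 2"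
proof -
  have "0 \<le> (Re a - Re b)\<^sup>2 + (Im a - Im b)\<^sup>2" by simp
  then show ?thesis unfolding cmod_power2 by (simp add: power2_eq_square algebra_simps)
qed

lemma norm_convex_comb_sq:
  fixes f g :: "'a::real_inner"
  shows "(norm ((1 - t) *\<^sub>R f + t *\<^sub>R g))\<^sup>2
       = (1 - t)\<^sup>2 * (norm f)\<^sup>2 + 2 * ((1 - t) * t) * inner f g + t\<^sup>2 * (norm g)\<^sup>2"
  unfolding power2_norm_eq_inner
  by (simp add: inner_add_left inner_add_right inner_commute[of g f] power2_eq_square algebra_simps)

lemma quadratic_descent:
  fixes a b m c r M t :: real
  assumes "0 \<le> a" "a \<le> c" "b \<le> r" "0 \<le> m" "m \<le> M" "0 \<le> r" "r < c"
    and t: "t = c * (c - r) / (c\<^sup>2 + M\<^sup>2)"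
  shows "(1 - t)\<^sup>2 * a\<^sup>2 + 2 * ((1 - t) * t) * (a * b) + t\<^sup>2 * m\<^sup>2 < c\<^sup>2"
proof -
  have "0 < c" and den: "0 < c\<^sup>2 + M\<^sup>2"
    using assms by (auto intro: add_pos_nonneg)
  have tden: "t * (c\<^sup>2 + M\<^sup>2) = c * (c - r)"
    using den by (simp add: t)
  have "0 < t" using \<open>0 < c\<close> \<open>r < c\<close> den by (simp add: t)
  have "t \<le> 1"
    using \<open>0 < c\<close> \<open>0 \<le> r\<close> den by (simp add: t field_simps power2_eq_square)
  have "(1 - t)\<^sup>2 * a\<^sup>2 \<le> (1 - t)\<^sup>2 * c\<^sup>2"
    using assms by (intro mult_left_mono power_mono) auto
  moreover have "2 * ((1 - t) * t) * (a * b) \<le> 2 * ((1 - t) * t) * (c * r)"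
  proof -
    have "a * b \<le> c * r"
      using assms by (meson mult_left_mono mult_right_mono order_trans)
    then show ?thesis using \<open>0 < t\<close> \<open>t \<le> 1\<close> by (intro mult_left_mono) auto
  qed
  moreover have "t\<^sup>2 * m\<^sup>2 \<le> t\<^sup>2 * M\<^sup>2"
    using assms by (intro mult_left_mono power_mono) auto
  moreover have "c\<^sup>2 - ((1 - t)\<^sup>2 * c\<^sup>2 + 2 * ((1 - t) * t) * (c * r) + t\<^sup>2 * M\<^sup>2)
      = t * (c * (c - r) + 2 * t * c * r)"
  proof -
    have "c\<^sup>2 - ((1 - t)\<^sup>2 * c\<^sup>2 + 2 * ((1 - t) * t) * (c * r) + t\<^sup>2 * M\<^sup>2)
        = t * (2 * c * (c - r) - t * (c\<^sup>2 + M\<^sup>2) + 2 * t * c * r)"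
      by (simp add: power2_eq_square algebra_simps)
    then show ?thesis unfolding tden by (simp add: algebra_simps)
  qed
  moreover have "0 < t * (c * (c - r) + 2 * t * c * r)"
    using \<open>0 < t\<close> \<open>0 < c\<close> assms by (intro mult_pos_pos add_pos_nonneg) auto
  ultimately show ?thesis by linarith
qed

lemma norm_convex_comb_descent:
  fixes f g :: "'a::real_inner"
  assumes "0 \<le> w" "w * (norm f)\<^sup>2 \<le> c" "w * inner f g \<le> r" "w * norm f * norm g \<le> M"
    and "0 \<le> r" "r < c" and "t = c * (c - r) / (c\<^sup>2 + M\<^sup>2)"
  shows "w * norm f * norm ((1 - t) *\<^sub>R f + t *\<^sub>R g) < c"
proof -
  have "(w * norm f * norm ((1 - t) *\<^sub>R f + t *\<^sub>R g))\<^sup>2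
      = (w * norm f)\<^sup>2 * (norm ((1 - t) *\<^sub>R f + t *\<^sub>R g))\<^sup>2"
    by (simp only: power_mult_distrib)
  also have "\<dots> = (1 - t)\<^sup>2 * (w * (norm f)\<^sup>2)\<^sup>2
      + 2 * ((1 - t) * t) * ((w * (norm f)\<^sup>2) * (w * inner f g)) + t\<^sup>2 * (w * norm f * norm g)\<^sup>2"
    unfolding norm_convex_comb_sq unfolding power2_eq_square by (simp only: distrib_left mult_ac)
  also have "\<dots> < c\<^sup>2"
    using assms by (intro quadratic_descent) auto
  finally show ?thesis
    by (rule power2_less_imp_less) (use assms in linarith)
qed

lemma spec_rad_rank_one:
  fixes a b :: "complex^'n"
  shows "spec_rad (\<lambda>v. (c * cinner v a) *s b) = cmod c * cmod (cinner b a)"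
  unfolding spec_rad_def
proof (rule cSup_eq_maximum)
  show "x \<le> cmod c * cmod (cinner b a)"
    if x: "x \<in> {cmod l | l. \<exists>v. v \<noteq> 0 \<and> (c * cinner v a) *s b = l *s v}" for x
  proof -
    obtain l v where lv: "x = cmod l" "v \<noteq> 0" "(c * cinner v a) *s b = l *s v"
      using x by auto
    show ?thesis
    proof (cases "l = 0")
      case False
      define s where "s = c * cinner v a"
      have v: "v = (s / l) *s b"
        using lv(3) False by (simp add: s_def vec_eq_iff field_simps)
      have "s \<noteq> 0"
        using lv(2,3) False by (auto simp: s_def)
      have "s = c * ((s / l) * cinner b a)"
        using v by (metis s_def cinner_scale_left)
      then have "l = c * cinner b a"
        using \<open>s \<noteq> 0\<close> False by (simp add: field_simps)
      then show ?thesis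
        using lv by (simp add: norm_mult)
    qed (use lv in simp)
  qed
  show "cmod c * cmod (cinner b a) \<in> {cmod l | l. \<exists>v. v \<noteq> 0 \<and> (c * cinner v a) *s b = l *s v}"
  proof (cases "b = 0")
    case True
    have "(1::complex^'n) \<noteq> 0" "(c * cinner 1 a) *s b = 0 *s (1::complex^'n)"
      using True by (simp_all add: vec_eq_iff)
    then show ?thesis
      using True by (auto simp: cinner_def)
  next
    case False
    then show ?thesis
      by (auto simp: norm_mult intro!: exI[of _ "c * cinner b a"])
  qed
qed

lemma Max_image_mono:
  fixes f g :: "'a \<Rightarrow> 'b::linorder"
  assumes "finite A" and "\<And>i. i \<in> A \<Longrightarrow> f i \<le> g i"
  shows "Max (f ` A) \<le> Max (g ` A)"
  using assms by (cases "A = {}") (auto simp: Max_le_iff intro: order_trans[OF _ Max_ge])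

lemma one_erasure_image:
  "{\<phi> \<Lambda> | \<Lambda>. \<Lambda> \<subseteq> {1..N} \<and> card \<Lambda> = 1} = (\<lambda>i. \<phi> {i}) ` {1..(N::nat)}"
  by (auto simp: card_1_singleton_iff)

lemma err_op_singleton:
  "err_op q F G {i} = (\<lambda>f. (complex_of_real (q i) * cinner f (F i)) *s G i)"
  by (simp add: err_op_def fun_eq_iff)

lemma r1_eq_Max: "r1 N q F G = Max ((\<lambda>i. \<bar>q i\<bar> * cmod (cinner (G i) (F i))) ` {1..N})"
  unfolding r1_def one_erasure_image err_op_singleton spec_rad_rank_one by simp

locale real_or_complex_scalars =
  fixes K :: "complex set"
  assumes real_or_complex: "K = \<real> \<or> K = UNIV"
begin

lemma Kvec_add: "Kvec K x \<Longrightarrow> Kvec K y \<Longrightarrow> Kvec K (x + y)"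
  using real_or_complex by (auto simp: Kvec_def)

lemma Kvec_diff: "Kvec K x \<Longrightarrow> Kvec K y \<Longrightarrow> Kvec K (x - y)"
  using real_or_complex by (auto simp: Kvec_def)

lemma Kvec_smult: "c \<in> K \<Longrightarrow> Kvec K x \<Longrightarrow> Kvec K (c *s x)"
  using real_or_complex by (auto simp: Kvec_def)

lemma Kvec_scaleR: "Kvec K x \<Longrightarrow> Kvec K (t *\<^sub>R x)"
  unfolding scaleR_eq_smult by (rule Kvec_smult) (use real_or_complex in auto)

lemma Kvec_zero: "Kvec K 0"
  using real_or_complex by (auto simp: Kvec_def)

lemma Kvec_sum: "(\<And>i. i \<in> A \<Longrightarrow> Kvec K (f i)) \<Longrightarrow> Kvec K (sum f A)"
  by (induct A rule: infinite_finite_induct) (auto simp: Kvec_zero Kvec_add)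

lemma cinner_in_K: "Kvec K x \<Longrightarrow> Kvec K y \<Longrightarrow> cinner x y \<in> K"
  using real_or_complex
  by (auto simp: cinner_def Kvec_def Reals_cnj_iff intro!: sum_in_Reals)

lemma op_norm_rank_one:
  assumes a: "Kvec K a"
  shows "op_norm K (\<lambda>v. (c * cinner v a) *s b) = cmod c * norm a * norm b"
  unfolding op_norm_def
proof (rule cSup_eq_maximum)
  show "x \<le> cmod c * norm a * norm b"
    if x: "x \<in> {norm ((c * cinner v a) *s b) | v. Kvec K v \<and> norm v \<le> 1}" for x
  proof -
    obtain v where v: "norm v \<le> 1" "x = cmod c * cmod (cinner v a) * norm b"
      using x by (auto simp: norm_smult norm_mult)
    have "cmod (cinner v a) \<le> norm a"
      using order_trans[OF cinner_Cauchy_Schwarz mult_left_le_one_le] v(1) by simp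
    then show ?thesis
      using v(2) by (simp add: mult_left_mono mult_right_mono)
  qed
  show "cmod c * norm a * norm b \<in> {norm ((c * cinner v a) *s b) | v. Kvec K v \<and> norm v \<le> 1}"
  proof (cases "a = 0")
    case True
    then show ?thesis using Kvec_zero by (auto intro!: exI[of _ 0] simp: cinner_def)
  next
    case False
    define v where "v = (1 / norm a) *\<^sub>R a"
    have "cinner v a = complex_of_real (norm a)"
      using False by (simp add: v_def scaleR_eq_smult cinner_scale_left cinner_self power2_eq_square)
    moreover have "Kvec K v" "norm v = 1"
      using a False by (simp_all add: v_def Kvec_scaleR)
    ultimately show ?thesis
      by (auto intro!: exI[of _ v] simp: norm_smult norm_mult)
  qed
qed

lemma O1_eq_Max:
  assumes "\<forall>i\<in>{1..N}. Kvec K (F i)"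
  shows "O1 K N q F G = Max ((\<lambda>i. \<bar>q i\<bar> * norm (F i) * norm (G i)) ` {1..N})"
  unfolding O1_def one_erasure_image err_op_singleton
  by (intro arg_cong[where f = Max] image_cong refl) (simp add: op_norm_rank_one assms)

lemma r1_le_A1_le_O1:
  assumes "\<forall>i\<in>{1..N}. Kvec K (F i)"
  shows "r1 N q F G \<le> A1 K N q F G" and "A1 K N q F G \<le> O1 K N q F G"
proof -
  have "spec_rad (err_op q F G {i}) \<le> op_norm K (err_op q F G {i})" if "i \<in> {1..N}" for i
  proof -
    have "\<bar>q i\<bar> * cmod (cinner (G i) (F i)) \<le> \<bar>q i\<bar> * norm (F i) * norm (G i)"
      using mult_left_mono[OF cinner_Cauchy_Schwarz[of "G i" "F i"], of "\<bar>q i\<bar>"]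
      by (simp add: mult.assoc mult.commute[of "norm (G i)"])
    then show ?thesis
      using that assms by (simp add: err_op_singleton op_norm_rank_one spec_rad_rank_one)
  qed
  then show "r1 N q F G \<le> A1 K N q F G" and "A1 K N q F G \<le> O1 K N q F G"
    unfolding r1_def A1_def O1_def one_erasure_image by (auto intro: Max_image_mono)
qed

end

locale parseval_frame = real_or_complex_scalars +
  fixes N :: nat and F :: "nat \<Rightarrow> complex^'n"
  assumes parseval: "is_parseval_frame K N F"
begin

lemma frame_vectors: "\<forall>i\<in>{1..N}. Kvec K (F i)"
  using parseval by (simp add: is_parseval_frame_def)

lemma parseval_identity: "Kvec K f \<Longrightarrow> (\<Sum>i=1..N. (cmod (cinner f (F i)))\<^sup>2) = (norm f)\<^sup>2"
  using parseval by (simp add: is_parseval_frame_def)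

text \<open>Polarization turns the Parseval identity into the reconstruction formula.\<close>

lemma reconstruction:
  assumes f: "Kvec K f"
  shows "(\<Sum>i=1..N. cinner f (F i) *s F i) = f"
proof -
  let ?S = "\<Sum>i=1..N. cinner f (F i) *s F i"
  have "inner ?S g = inner f g" if g: "Kvec K g" for g
  proof -
    have "inner ?S g = (\<Sum>i=1..N. inner (cinner f (F i)) (cinner g (F i)))"
      by (simp add: Re_cinner[symmetric] cinner_sum_left cinner_scale_left Re_sum
          cinner_commute[of "F _" g] inner_complex_def)
    also have "\<dots> = (\<Sum>i=1..N. ((cmod (cinner (f + g) (F i)))\<^sup>2
        - (cmod (cinner f (F i)))\<^sup>2 - (cmod (cinner g (F i)))\<^sup>2) / 2)"
      by (simp add: dot_norm cinner_add_left)
    also have "\<dots> = ((norm (f + g))\<^sup>2 - (norm f)\<^sup>2 - (norm g)\<^sup>2) / 2"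
      using parseval_identity[OF f] parseval_identity[OF g] parseval_identity[OF Kvec_add[OF f g]]
      by (simp add: sum_subtractf sum_divide_distrib[symmetric])
    also have "\<dots> = inner f g"
      by (simp add: dot_norm)
    finally show ?thesis .
  qed
  moreover have "Kvec K (?S - f)"
    using f frame_vectors by (intro Kvec_diff Kvec_sum Kvec_smult cinner_in_K) auto
  ultimately have "inner (?S - f) (?S - f) = 0"
    by (simp add: inner_diff_left)
  then show ?thesis by simp
qed

lemma canonical_dual_eq:
  assumes "i \<in> {1..N}"
  shows "canonical_dual K N F i = F i"
proof -
  have id: "frame_op N F f = f" if "Kvec K f" for f
    using reconstruction[OF that] by (simp add: frame_op_def)
  then have "inj_on (frame_op N F) {f. Kvec K f}"
    by (auto intro: inj_onI)
  then show ?thesis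
    using inv_into_f_f[of "frame_op N F" "{f. Kvec K f}" "F i"] id frame_vectors assms
    by (simp add: canonical_dual_def)
qed

lemma is_dual_if_reconstructs:
  assumes GK: "\<And>i. i \<in> {1..N} \<Longrightarrow> Kvec K (G i)"
    and rec_FG: "\<And>f. Kvec K f \<Longrightarrow> (\<Sum>i=1..N. cinner f (F i) *s G i) = f"
    and rec_GF: "\<And>f. Kvec K f \<Longrightarrow> (\<Sum>i=1..N. cinner f (G i) *s F i) = f"
  shows "is_dual K N F G"
proof -
  define B where "B = 1 + (\<Sum>i=1..N. (norm (G i))\<^sup>2)"
  have "1 * (norm f)\<^sup>2 \<le> (\<Sum>i=1..N. (cmod (cinner f (G i)))\<^sup>2)
      \<and> (\<Sum>i=1..N. (cmod (cinner f (G i)))\<^sup>2) \<le> B * (norm f)\<^sup>2" if f: "Kvec K f" for f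
  proof
    have "(norm f)\<^sup>2 = Re (cinner (\<Sum>i=1..N. cinner f (G i) *s F i) f)"
      using rec_GF[OF f] by (simp add: cinner_self)
    also have "\<dots> = (\<Sum>i=1..N. Re (cinner f (G i) * cnj (cinner f (F i))))"
      by (simp add: cinner_sum_left cinner_scale_left Re_sum cinner_commute[of f "F _"])
    also have "\<dots> \<le> (\<Sum>i=1..N. ((cmod (cinner f (G i)))\<^sup>2 + (cmod (cinner f (F i)))\<^sup>2) / 2)"
      by (intro sum_mono Re_mult_cnj_le)
    also have "\<dots> = ((\<Sum>i=1..N. (cmod (cinner f (G i)))\<^sup>2) + (norm f)\<^sup>2) / 2"
      using parseval_identity[OF f] by (simp add: sum.distrib sum_divide_distrib[symmetric])
    finally show "1 * (norm f)\<^sup>2 \<le> (\<Sum>i=1..N. (cmod (cinner f (G i)))\<^sup>2)" by simp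
  next
    have "(\<Sum>i=1..N. (cmod (cinner f (G i)))\<^sup>2) \<le> (\<Sum>i=1..N. (norm f * norm (G i))\<^sup>2)"
      by (intro sum_mono power_mono cinner_Cauchy_Schwarz) auto
    also have "\<dots> \<le> B * (norm f)\<^sup>2"
      by (simp add: B_def power_mult_distrib sum_distrib_left[symmetric] algebra_simps)
    finally show "(\<Sum>i=1..N. (cmod (cinner f (G i)))\<^sup>2) \<le> B * (norm f)\<^sup>2" .
  qed
  moreover have "1 \<le> B"
    by (simp add: B_def sum_nonneg)
  ultimately have "is_frame K N G"
    unfolding is_frame_def using GK by (blast intro: zero_less_one)
  then show ?thesis
    unfolding is_dual_def using rec_FG rec_GF by metis
qed

lemma is_dual_if_eq_frame:
  assumes eq: "\<And>i. i \<in> {1..N} \<Longrightarrow> G i = F i"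
  shows "is_dual K N F G"
proof (rule is_dual_if_reconstructs)
  show "Kvec K (G i)" if "i \<in> {1..N}" for i
    using that eq frame_vectors by simp
  fix f :: "complex^'n" assume "Kvec K f"
  moreover have "(\<Sum>i=1..N. cinner f (F i) *s G i) = (\<Sum>i=1..N. cinner f (F i) *s F i)"
    and "(\<Sum>i=1..N. cinner f (G i) *s F i) = (\<Sum>i=1..N. cinner f (F i) *s F i)"
    using eq by (auto intro: sum.cong)
  ultimately show "(\<Sum>i=1..N. cinner f (F i) *s G i) = f" and "(\<Sum>i=1..N. cinner f (G i) *s F i) = f"
    using reconstruction by simp_all
qed

lemma is_dual_convex_comb:
  assumes "is_dual K N F G" and "is_dual K N F H"
  shows "is_dual K N F (\<lambda>i. (1 - t) *\<^sub>R G i + t *\<^sub>R H i)"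
proof (rule is_dual_if_reconstructs)
  have GK: "\<And>i. i \<in> {1..N} \<Longrightarrow> Kvec K (G i)" and HK: "\<And>i. i \<in> {1..N} \<Longrightarrow> Kvec K (H i)"
    using assms by (simp_all add: is_dual_def is_frame_def)
  then show "Kvec K ((1 - t) *\<^sub>R G i + t *\<^sub>R H i)" if "i \<in> {1..N}" for i
    using that by (simp add: Kvec_add Kvec_scaleR)
  fix f :: "complex^'n" assume "Kvec K f"
  then have "f = (\<Sum>i=1..N. cinner f (F i) *s G i)" "f = (\<Sum>i=1..N. cinner f (G i) *s F i)"
    and "f = (\<Sum>i=1..N. cinner f (F i) *s H i)" "f = (\<Sum>i=1..N. cinner f (H i) *s F i)"
    using assms by (simp_all add: is_dual_def)
  then show "(\<Sum>i=1..N. cinner f (F i) *s ((1 - t) *\<^sub>R G i + t *\<^sub>R H i)) = f"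
    and "(\<Sum>i=1..N. cinner f ((1 - t) *\<^sub>R G i + t *\<^sub>R H i) *s F i) = f"
    by (simp_all add: smult_scaleR_commute cinner_add_right cinner_scaleR_right scaleR_smult_assoc
        sum.distrib scaleR_sum_right[symmetric] scaleR_left_distrib[symmetric])
qed

lemma O1_canonical_dual:
  "O1 K N q F (canonical_dual K N F) = Max ((\<lambda>i. \<bar>q i\<bar> * (norm (F i))\<^sup>2) ` {1..N})"
  unfolding O1_eq_Max[OF frame_vectors]
  by (intro arg_cong[where f = Max] image_cong refl) (simp add: canonical_dual_eq power2_eq_square)

lemma r1_canonical_dual:
  "r1 N q F (canonical_dual K N F) = Max ((\<lambda>i. \<bar>q i\<bar> * (norm (F i))\<^sup>2) ` {1..N})"
  unfolding r1_eq_Max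
  by (intro arg_cong[where f = Max] image_cong refl) (simp add: canonical_dual_eq cinner_self norm_power)

lemma one_erasure_descent:
  assumes "1 \<le> N" and G: "is_dual K N F G"
    and lt: "r1 N q F G < Max ((\<lambda>i. \<bar>q i\<bar> * (norm (F i))\<^sup>2) ` {1..N})"
  shows "\<exists>G'. is_dual K N F G' \<and> O1 K N q F G' < Max ((\<lambda>i. \<bar>q i\<bar> * (norm (F i))\<^sup>2) ` {1..N})"
proof -
  define c where "c = Max ((\<lambda>i. \<bar>q i\<bar> * (norm (F i))\<^sup>2) ` {1..N})"
  define r where "r = r1 N q F G"
  define M where "M = O1 K N q F G"
  define t where "t = c * (c - r) / (c\<^sup>2 + M\<^sup>2)"
  define G' where "G' = (\<lambda>i. (1 - t) *\<^sub>R F i + t *\<^sub>R G i)"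
  have fin: "finite {1..N}" and ne: "{1..N} \<noteq> {}"
    using assms(1) by auto
  have r_ge: "\<bar>q i\<bar> * cmod (cinner (G i) (F i)) \<le> r" if "i \<in> {1..N}" for i
    using fin that by (simp add: r_def r1_eq_Max)
  have "0 \<le> r"
    using order_trans[OF _ r_ge[of 1]] assms(1) by simp
  have "\<bar>q i\<bar> * norm (F i) * norm (G' i) < c" if i: "i \<in> {1..N}" for i
    unfolding G'_def
  proof (rule norm_convex_comb_descent)
    show "\<bar>q i\<bar> * (norm (F i))\<^sup>2 \<le> c"
      using fin i by (simp add: c_def)
    show "\<bar>q i\<bar> * norm (F i) * norm (G i) \<le> M"
      using fin i by (simp add: M_def O1_eq_Max[OF frame_vectors])
    have "inner (F i) (G i) \<le> cmod (cinner (G i) (F i))"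
      using complex_Re_le_cmod[of "cinner (F i) (G i)"] by (simp add: Re_cinner cinner_commute[of "G i"])
    then show "\<bar>q i\<bar> * inner (F i) (G i) \<le> r"
      using r_ge[OF i] by (meson abs_ge_zero mult_left_mono order_trans)
  qed (use \<open>0 \<le> r\<close> lt in \<open>simp_all add: r_def c_def t_def\<close>)
  then have "O1 K N q F G' < c"
    using fin ne by (simp add: O1_eq_Max[OF frame_vectors])
  moreover have "is_dual K N F G'"
    unfolding G'_def by (rule is_dual_convex_comb[OF is_dual_if_eq_frame G]) simp
  ultimately show ?thesis
    unfolding c_def by blast
qed

end

lemma minimizers_coincide:
  fixes rad avg nrm :: "'a \<Rightarrow> real"
  assumes "C \<in> D"
    and sandwich: "\<And>G. G \<in> D \<Longrightarrow> rad G \<le> avg G \<and> avg G \<le> nrm G"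
    and attained: "rad C = nrm C"
    and descent: "\<And>G. G \<in> D \<Longrightarrow> rad G < nrm C \<Longrightarrow> \<exists>G'\<in>D. nrm G' < nrm C"
  shows "(\<forall>G\<in>D. nrm C \<le> nrm G) \<longleftrightarrow> (\<forall>G\<in>D. rad C \<le> rad G)"
    and "(\<forall>G\<in>D. rad C \<le> rad G) \<longleftrightarrow> (\<forall>G\<in>D. avg C \<le> avg G)"
proof -
  have avg_C: "avg C = rad C"
    using sandwich[OF \<open>C \<in> D\<close>] attained by linarith
  show nrm_iff_rad: "(\<forall>G\<in>D. nrm C \<le> nrm G) \<longleftrightarrow> (\<forall>G\<in>D. rad C \<le> rad G)"
  proof
    assume nrm_min: "\<forall>G\<in>D. nrm C \<le> nrm G"
    show "\<forall>G\<in>D. rad C \<le> rad G"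
    proof (rule ballI, rule ccontr)
      fix G assume "G \<in> D" "\<not> rad C \<le> rad G"
      then obtain G' where "G' \<in> D" "nrm G' < nrm C"
        using descent attained by force
      with nrm_min show False by force
    qed
  next
    assume "\<forall>G\<in>D. rad C \<le> rad G"
    then show "\<forall>G\<in>D. nrm C \<le> nrm G"
      using sandwich attained by force
  qed
  show "(\<forall>G\<in>D. rad C \<le> rad G) \<longleftrightarrow> (\<forall>G\<in>D. avg C \<le> avg G)"
  proof
    assume "\<forall>G\<in>D. rad C \<le> rad G"
    then show "\<forall>G\<in>D. avg C \<le> avg G"
      using sandwich avg_C by force
  next
    assume "\<forall>G\<in>D. avg C \<le> avg G"
    then have "\<forall>G\<in>D. nrm C \<le> nrm G"
      using sandwich attained avg_C by force
    then show "\<forall>G\<in>D. rad C \<le> rad G"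
      using nrm_iff_rad by blast
  qed
qed

theorem corollary3p1:
  fixes K :: "complex set" and N :: nat and F :: "nat \<Rightarrow> complex^'n" and p :: "nat \<Rightarrow> real"
  assumes "K = \<real> \<or> K = UNIV"
    and "is_parseval_frame K N F"
    and "prob_seq N p"
  shows "(is_POD K N (weight_num N CARD('n) p) F (canonical_dual K N F)
            \<longleftrightarrow> is_PSOD K N (weight_num N CARD('n) p) F (canonical_dual K N F))
       \<and> (is_PSOD K N (weight_num N CARD('n) p) F (canonical_dual K N F)
            \<longleftrightarrow> is_PASOD K N (weight_num N CARD('n) p) F (canonical_dual K N F))"
proof -
  interpret parseval_frame K N F
    using assms(1,2) by unfold_locales
  have "1 \<le> N"
    using assms(3) by (cases N) (auto simp: prob_seq_def)
  let ?q = "weight_num N CARD('n) p" and ?C = "canonical_dual K N F" and ?D = "{G. is_dual K N F G}"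
  have "?C \<in> ?D"
    using is_dual_if_eq_frame canonical_dual_eq by simp
  moreover have "r1 N ?q F G \<le> A1 K N ?q F G \<and> A1 K N ?q F G \<le> O1 K N ?q F G" for G
    using r1_le_A1_le_O1[OF frame_vectors] by blast
  moreover have "r1 N ?q F ?C = O1 K N ?q F ?C"
    by (simp add: O1_canonical_dual r1_canonical_dual)
  moreover have "\<exists>G'\<in>?D. O1 K N ?q F G' < O1 K N ?q F ?C"
    if "G \<in> ?D" "r1 N ?q F G < O1 K N ?q F ?C" for G
    using one_erasure_descent[OF \<open>1 \<le> N\<close>] that by (simp add: O1_canonical_dual)
  ultimately have "(\<forall>G\<in>?D. O1 K N ?q F ?C \<le> O1 K N ?q F G) \<longleftrightarrow> (\<forall>G\<in>?D. r1 N ?q F ?C \<le> r1 N ?q F G)"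
    and "(\<forall>G\<in>?D. r1 N ?q F ?C \<le> r1 N ?q F G) \<longleftrightarrow> (\<forall>G\<in>?D. A1 K N ?q F ?C \<le> A1 K N ?q F G)"
    by (rule minimizers_coincide; blast)+
  with \<open>?C \<in> ?D\<close> show ?thesis
    unfolding is_POD_def is_PSOD_def is_PASOD_def by simp
qed

end
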